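(* Let $0<q<1$, $\tau,\sigma\in\mathbb{R}$ and $\phi\in[0,2\pi)$. Let $\{e_n\}_{n\in\mathbb{Z}_+}$ be the standard orthonormal basis of $\ell^2(\mathbb{Z}_+)$ (with $e_{-1}=0$), and define bounded operators $A,C$ on $\ell^2(\mathbb{Z}_+)$ by $Ae_n=\sqrt{1-q^{2n}}\,e_{n-1}$, $Ce_n=e^{i\phi}q^ne_n$. Let $$R=\tfrac12\Big(A^2+(A^* )^2+qC^2+q(C^* )^2+iq(q^{-\sigma}-q^{\sigma})(A^*C-C^*A)-iq(q^{-\tau}-q^{\tau})(CA-A^*C^* )-q(q^{-\sigma}-q^{\sigma})(q^{-\tau}-q^{\tau})C^*C\Big).$$ For $\lambda\in\{-q^{2k}\mid k\in\mathbb{Z}_+\}\cup\{q^{2\tau+2k}\mid k\in\mathbb{Z}_+\}$ let $$v_\lambda^\phi=\sum_{n=0}^\infty i^n e^{in\phi}p_n(\lambda)e_n,\qquad p_n(\lambda)=\frac{q^{-n\tau}q^{\frac12 n(n-1)}}{\sqrt{(q^2;q^2)_n}}\;{}_2\varphi_1\!\left(q^{-2n},\,q^{2\tau}/\lambda;\,0;\,q^2,\,-q^2\lambda\right).$$ Then for every such $\lambda$, $$2Rv_\lambda^\phi=qe^{-2i\phi}v^\phi_{\lambda q^2}+q^{-1}e^{2i\phi}(1-q^{-2\tau}\lambda)(1+\lambda)v^\phi_{\lambda/q^2}+\lambda q^{1-\tau}(q^{-\sigma}-q^{\sigma})v^\phi_\lambda,$$ where the middle term is interpreted as $0$ when its coefficient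 vanishes (i.e. for $\lambda=-1$ and $\lambda=q^{2\tau}$).
   Context: $R$ is the image of the element $\rho_{\tau,\sigma}$ of the quantum $SU(2)$ $C^*$-algebra under the representation $\pi_\phi$ ($\alpha\mapsto A$, $\gamma\mapsto C$). For $k\in\mathbb{Z}_+\cup\{\infty\}$, $(a;q)_k=\prod_{i=0}^{k-1}(1-aq^i)$, and ${}_2\varphi_1(a,b;c;p,z)=\sum_{j\ge0}\frac{(a;p)_j(b;p)_j}{(p;p)_j(c;p)_j}z^j$. The vectors $v_\lambda^\phi$ lie in $\ell^2(\mathbb{Z}_+)$ and form an orthogonal basis of it. *)

theory Defs
  imports "HOL-Analysis.Analysis"
begin

text \<open>Vectors of l2(Z+) are represented by their coordinate sequences nat => complex;
  the operators A, C (and adjoints) act on coordinates exactly as the bounded operators do.\<close>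

definition qpoch :: "complex \<Rightarrow> complex \<Rightarrow> nat \<Rightarrow> complex" where
  "qpoch a p k = (\<Prod>i<k. 1 - a * p ^ i)"

definition phi21 :: "complex \<Rightarrow> complex \<Rightarrow> complex \<Rightarrow> complex \<Rightarrow> complex \<Rightarrow> complex" where
  "phi21 a b c p z = (\<Sum>j. qpoch a p j * qpoch b p j / (qpoch p p j * qpoch c p j) * z ^ j)"

text \<open>A e_n = sqrt(1-q^(2n)) e_(n-1), so (A x)_n = sqrt(1-q^(2n+2)) x_(n+1).\<close>
definition opA :: "real \<Rightarrow> (nat \<Rightarrow> complex) \<Rightarrow> nat \<Rightarrow> complex" where
  "opA q x n = complex_of_real (sqrt (1 - q ^ (2 * (n + 1)))) * x (n + 1)"

definition opAadj :: "real \<Rightarrow> (nat \<Rightarrow> complex) \<Rightarrow> nat \<Rightarrow> complex" where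
  "opAadj q x n = (if n = 0 then 0 else complex_of_real (sqrt (1 - q ^ (2 * n))) * x (n - 1))"

definition opC :: "real \<Rightarrow> real \<Rightarrow> (nat \<Rightarrow> complex) \<Rightarrow> nat \<Rightarrow> complex" where
  "opC q \<phi> x n = exp (\<i> * complex_of_real \<phi>) * complex_of_real (q ^ n) * x n"

definition opCadj :: "real \<Rightarrow> real \<Rightarrow> (nat \<Rightarrow> complex) \<Rightarrow> nat \<Rightarrow> complex" where
  "opCadj q \<phi> x n = exp (- \<i> * complex_of_real \<phi>) * complex_of_real (q ^ n) * x n"

definition opR :: "real \<Rightarrow> real \<Rightarrow> real \<Rightarrow> real \<Rightarrow> (nat \<Rightarrow> complex) \<Rightarrow> nat \<Rightarrow> complex" where
  "opR q \<tau> \<sigma> \<phi> x n =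
     (let A = opA q; Ad = opAadj q; C = opC q \<phi>; Cd = opCadj q \<phi>;
          s = complex_of_real (q powr (- \<sigma>) - q powr \<sigma>);
          t = complex_of_real (q powr (- \<tau>) - q powr \<tau>);
          qc = complex_of_real q
      in (1/2) * ( A (A x) n + Ad (Ad x) n + qc * C (C x) n + qc * Cd (Cd x) n
          + \<i> * qc * s * (Ad (C x) n - Cd (A x) n)
          - \<i> * qc * t * (C (A x) n - Ad (Cd x) n)
          - qc * s * t * Cd (C x) n))"

definition pn :: "real \<Rightarrow> real \<Rightarrow> nat \<Rightarrow> real \<Rightarrow> complex" where
  "pn q \<tau> n lam =
     complex_of_real (q powr (- real n * \<tau>) * q powr (real n * (real n - 1) / 2))
     / csqrt (qpoch (complex_of_real (q^2)) (complex_of_real (q^2)) n)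
     * phi21 (complex_of_real (q powr (- 2 * real n))) (complex_of_real (q powr (2 * \<tau>) / lam)) 0
             (complex_of_real (q^2)) (complex_of_real (- (q^2) * lam))"

definition vvec :: "real \<Rightarrow> real \<Rightarrow> real \<Rightarrow> real \<Rightarrow> nat \<Rightarrow> complex" where
  "vvec q \<tau> \<phi> lam n = \<i> ^ n * exp (\<i> * of_nat n * complex_of_real \<phi>) * pn q \<tau> n lam"

end

theory Submission
  imports Defs
begin

text \<open>
  Up to the phases \<open>(\<i> e\<^sup>i\<^sup>\<phi>)\<^sup>n\<close>, the coordinates of \<open>v\<^sub>\<lambda>\<close> are real numbers
  \<open>c\<^sub>n P\<^sub>n(\<lambda>)\<close>, where \<open>P\<^sub>n\<close> is the terminating \<open>\<^sub>2\<phi>\<^sub>1\<close>, a polynomial in \<open>\<lambda>\<close> which is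
  best expanded in the Newton basis \<open>(\<lambda> - q\<^sup>2\<^sup>\<tau>)(\<lambda> - q\<^sup>2\<^sup>\<tau>q\<^sup>2)\<cdots>\<close>.
  Sorting the terms of \<open>2R\<close> by their phase leaves three real difference operators in \<open>n\<close>, and on
  \<open>c\<^sub>n P\<^sub>n(\<lambda>)\<close> they act through the three basic identities of \<open>P\<^sub>n\<close>: the three-term
  recurrence in \<open>n\<close>, which produces the term \<open>\<lambda> v\<^sub>\<lambda>\<close>, and the two \<open>q\<close>-difference equations
  expressing \<open>P\<^sub>n(q\<^sup>2\<lambda>)\<close> and \<open>P\<^sub>n(\<lambda>/q\<^sup>2)\<close> through \<open>P\<^sub>m(\<lambda>)\<close>, \<open>|m - n| \<le> 2\<close>.
  In the Newton basis each identity reduces to contiguity relations, in \<open>n\<close> and in \<open>k\<close>, of the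
  coefficients \<open>(-Q)\<^sup>k (Q\<^sup>-\<^sup>n;Q)\<^sub>k / (Q;Q)\<^sub>k\<close> with \<open>Q = q\<^sup>2\<close>.
\<close>

definition qpochhammer :: "'a::comm_ring_1 \<Rightarrow> 'a \<Rightarrow> nat \<Rightarrow> 'a" where
  "qpochhammer a p k = (\<Prod>i<k. 1 - a * p ^ i)"

definition qnewton :: "'a::comm_ring_1 \<Rightarrow> 'a \<Rightarrow> nat \<Rightarrow> 'a \<Rightarrow> 'a" where
  "qnewton Q b k x = (\<Prod>i<k. x - b * Q ^ i)"

definition qcoeff :: "'a::field \<Rightarrow> nat \<Rightarrow> nat \<Rightarrow> 'a" where
  "qcoeff Q n k = (- Q) ^ k * qpochhammer (inverse (Q ^ n)) Q k / qpochhammer Q Q k"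

text \<open>\<open>qpoly Q b n x\<close> is the terminating \<open>\<^sub>2\<phi>\<^sub>1(Q\<^sup>-\<^sup>n, b/x; 0; Q, -Q x)\<close>
  (see \<open>phi21_terminating\<close>), expanded in the Newton basis with nodes \<open>b Q\<^sup>i\<close>.\<close>

definition qpoly :: "'a::field \<Rightarrow> 'a \<Rightarrow> nat \<Rightarrow> 'a \<Rightarrow> 'a" where
  "qpoly Q b n x = (\<Sum>k\<le>n. qcoeff Q n k * qnewton Q b k x)"

lemma qpochhammer_Suc: "qpochhammer a p (Suc k) = qpochhammer a p k * (1 - a * p ^ k)"
  by (simp add: qpochhammer_def)

lemma qpochhammer_Suc_shift: "qpochhammer a p (Suc k) = (1 - a) * qpochhammer (a * p) p k"
  unfolding qpochhammer_def prod.lessThan_Suc_shift by (simp add: mult.assoc)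

lemma qnewton_0 [simp]: "qnewton Q b 0 x = 1"
  by (simp add: qnewton_def)

lemma qnewton_Suc: "qnewton Q b (Suc k) x = qnewton Q b k x * (x - b * Q ^ k)"
  by (simp add: qnewton_def)

lemma qnewton_Suc_shift: "qnewton Q b (Suc k) (Q * x) = Q ^ k * (Q * x - b) * qnewton Q b k x"
proof -
  have "(\<Prod>i<k. Q * x - b * Q ^ Suc i) = (\<Prod>i<k. Q * (x - b * Q ^ i))"
    by (simp add: algebra_simps)
  then show ?thesis
    unfolding qnewton_def prod.lessThan_Suc_shift by (simp add: prod.distrib)
qed

lemma qnewton_Suc_mult:
  "qnewton Q b (Suc k) (Q * x) = Q ^ Suc k * qnewton Q b (Suc k) x + b * (Q ^ (2 * k + 1) - Q ^ k) * qnewton Q b k x"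
proof -
  have "Q ^ (2 * k + 1) = Q * Q ^ k * Q ^ k"
    by (simp add: power_add mult_2)
  then show ?thesis
    unfolding qnewton_Suc_shift qnewton_Suc[of Q b k x] by (simp add: algebra_simps)
qed

lemma qnewton_div:
  fixes Q :: "'a::field"
  assumes "Q \<noteq> 0"
  shows "(b - x) * qnewton Q b k (x / Q) = - (inverse Q ^ k * qnewton Q b (Suc k) x)"
proof -
  have "Q * (x / Q) = x"
    using assms by simp
  then have "qnewton Q b (Suc k) x = Q ^ k * (x - b) * qnewton Q b k (x / Q)"
    using qnewton_Suc_shift[of Q b k "x / Q"] by simp
  then show ?thesis
    using assms by (simp add: power_inverse field_simps)
qed

lemma qnewton_div_shift:
  fixes Q :: "'a::field"
  assumes "Q \<noteq> 0"
  shows "(b - x) * (1 + x) * qnewton Q b k (x / Q)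
    = - (inverse Q ^ k * (qnewton Q b (Suc (Suc k)) x + qnewton Q b (Suc k) x)) - b * Q * qnewton Q b (Suc k) x"
proof -
  have "(b - x) * (1 + x) * qnewton Q b k (x / Q) = (1 + x) * ((b - x) * qnewton Q b k (x / Q))"
    by (simp only: mult_ac)
  also have "\<dots> = - (inverse Q ^ k * ((1 + x) * qnewton Q b (Suc k) x))"
    unfolding qnewton_div[OF assms] by (simp only: mult_ac mult_minus_right)
  also have "(1 + x) * qnewton Q b (Suc k) x
      = qnewton Q b (Suc (Suc k)) x + qnewton Q b (Suc k) x + b * Q ^ Suc k * qnewton Q b (Suc k) x"
    unfolding qnewton_Suc[of Q b "Suc k" x] by (simp add: algebra_simps)
  also have "- (inverse Q ^ k * (qnewton Q b (Suc (Suc k)) x + qnewton Q b (Suc k) x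
        + b * Q ^ Suc k * qnewton Q b (Suc k) x))
      = - (inverse Q ^ k * (qnewton Q b (Suc (Suc k)) x + qnewton Q b (Suc k) x))
        - b * (inverse Q ^ k * Q ^ Suc k) * qnewton Q b (Suc k) x"
    by algebra
  also have "inverse Q ^ k * Q ^ Suc k = Q"
    using assms by (simp add: power_inverse field_simps)
  finally show ?thesis .
qed

lemma qcoeff_0 [simp]: "qcoeff Q n 0 = 1"
  by (simp add: qcoeff_def qpochhammer_def)

lemma qcoeff_Suc: "qcoeff Q n (Suc k) = - Q * (1 - inverse (Q ^ n) * Q ^ k) * qcoeff Q n k / (1 - Q ^ Suc k)"
  unfolding qcoeff_def qpochhammer_Suc by (simp add: divide_inverse mult_ac)

lemma qcoeff_eq_0:
  fixes Q :: "'a::field"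
  assumes "Q \<noteq> 0" and "n < k"
  shows "qcoeff Q n k = 0"
proof -
  have "qpochhammer (inverse (Q ^ n)) Q k = 0"
    unfolding qpochhammer_def using assms by (intro prod_zero bexI[of _ n]) auto
  then show ?thesis by (simp add: qcoeff_def)
qed

context
  fixes Q :: "'a :: field"
  assumes Q_nz: "Q \<noteq> 0" and Q_pow_ne_1: "\<And>k. Q ^ Suc k \<noteq> 1"
begin

lemma qcoeff_Suc_pred:
  "Q ^ n * (1 - Q ^ Suc k) * qcoeff Q n (Suc k) = Q * (1 - Q ^ n) * qcoeff Q (n - 1) k"
proof (cases n)
  case 0
  then show ?thesis by (simp add: qcoeff_def qpochhammer_Suc_shift)
next
  case (Suc m)
  have "inverse (Q ^ n) * Q = inverse (Q ^ m)"
    using Q_nz Suc by (simp add: field_simps)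
  then have shift: "qpochhammer (inverse (Q ^ n)) Q (Suc k)
      = (1 - inverse (Q ^ n)) * qpochhammer (inverse (Q ^ m)) Q k"
    by (simp add: qpochhammer_Suc_shift)
  have "1 - Q ^ Suc k \<noteq> 0"
    using Q_pow_ne_1[of k] by simp
  have "qcoeff Q n (Suc k) = - Q * (1 - inverse (Q ^ n)) * qcoeff Q m k / (1 - Q ^ Suc k)"
    unfolding qcoeff_def shift qpochhammer_Suc[of Q Q k] by (simp add: divide_inverse mult_ac)
  then have step: "(1 - Q ^ Suc k) * qcoeff Q n (Suc k) = - Q * (1 - inverse (Q ^ n)) * qcoeff Q m k"
    using \<open>1 - Q ^ Suc k \<noteq> 0\<close> by simp
  have "Q ^ n * (1 - Q ^ Suc k) * qcoeff Q n (Suc k) = Q ^ n * ((1 - Q ^ Suc k) * qcoeff Q n (Suc k))"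
    by (rule mult.assoc)
  also have "\<dots> = - Q * (Q ^ n * (1 - inverse (Q ^ n))) * qcoeff Q m k"
    unfolding step by (simp only: mult_ac)
  also have "Q ^ n * (1 - inverse (Q ^ n)) = - (1 - Q ^ n)"
    using Q_nz by (simp add: field_simps)
  finally show ?thesis
    using Suc by (simp add: algebra_simps)
qed

lemma qcoeff_pred: "(1 - Q ^ n) * qcoeff Q (n - 1) k = (Q ^ k - Q ^ n) * qcoeff Q n k"
proof -
  have "Q ^ n * (1 - Q ^ Suc k) * qcoeff Q n (Suc k) = Q * ((Q ^ k - Q ^ n) * qcoeff Q n k)"
    using Q_pow_ne_1[of k] Q_nz unfolding qcoeff_Suc by (simp add: field_simps)
  then show ?thesis
    using qcoeff_Suc_pred[of n k] Q_nz by simp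
qed

lemma qcoeff_Suc_diff: "Q ^ n * (qcoeff Q (Suc n) (Suc k) - qcoeff Q n (Suc k)) = qcoeff Q n k"
proof -
  have mixed: "Q ^ n * (1 - Q ^ Suc k) * qcoeff Q (Suc n) (Suc k) = (1 - Q ^ Suc n) * qcoeff Q n k"
    using qcoeff_Suc_pred[of "Suc n" k] Q_nz by (simp add: mult.assoc)
  have pred: "(1 - Q ^ Suc n) * qcoeff Q n (Suc k) = (Q ^ Suc k - Q ^ Suc n) * qcoeff Q (Suc n) (Suc k)"
    using qcoeff_pred[of "Suc n" "Suc k"] by simp
  have "(1 - Q ^ Suc n) * (Q ^ n * (qcoeff Q (Suc n) (Suc k) - qcoeff Q n (Suc k)))
      = Q ^ n * ((1 - Q ^ Suc n) * qcoeff Q (Suc n) (Suc k)) - Q ^ n * ((1 - Q ^ Suc n) * qcoeff Q n (Suc k))"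
    by (simp add: algebra_simps)
  also have "\<dots> = Q ^ n * (1 - Q ^ Suc k) * qcoeff Q (Suc n) (Suc k)"
    unfolding pred by (simp add: algebra_simps)
  finally show ?thesis
    unfolding mixed using Q_pow_ne_1[of n] by simp
qed

lemma qcoeff_Suc_Suc: "Q ^ Suc k * qcoeff Q (Suc n) (Suc k) = qcoeff Q n (Suc k) + Q * qcoeff Q n k"
proof -
  have "qcoeff Q n (Suc k) + Q * qcoeff Q n k
      = (1 - Q ^ Suc n) * qcoeff Q n (Suc k) + Q ^ Suc n * qcoeff Q (Suc n) (Suc k)"
    unfolding qcoeff_Suc_diff[of n k, symmetric] by (simp add: algebra_simps)
  also have "\<dots> = Q ^ Suc k * qcoeff Q (Suc n) (Suc k)"
    using qcoeff_pred[of "Suc n" "Suc k"] by (simp add: algebra_simps)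
  finally show ?thesis ..
qed

lemma sum_atMost_qcoeff_extend:
  assumes "n \<le> N" and "\<And>k. qcoeff Q n k = 0 \<Longrightarrow> f k = 0"
  shows "(\<Sum>k\<le>n. f k) = (\<Sum>k\<le>N. f k)"
  using assms by (intro sum.mono_neutral_left) (auto simp: qcoeff_eq_0[OF Q_nz])

lemma qpoly_Suc_diff:
  "Q ^ n * (qpoly Q b (Suc n) x - qpoly Q b n x) = (\<Sum>k\<le>n. qcoeff Q n k * qnewton Q b (Suc k) x)"
proof -
  have "qpoly Q b n x = (\<Sum>k\<le>Suc n. qcoeff Q n k * qnewton Q b k x)"
    unfolding qpoly_def by (rule sum_atMost_qcoeff_extend) auto
  then have "qpoly Q b (Suc n) x - qpoly Q b n x
      = (\<Sum>k\<le>Suc n. (qcoeff Q (Suc n) k - qcoeff Q n k) * qnewton Q b k x)"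
    by (simp add: qpoly_def sum_subtractf left_diff_distrib del: sum.atMost_Suc)
  also have "\<dots> = (\<Sum>k\<le>n. (qcoeff Q (Suc n) (Suc k) - qcoeff Q n (Suc k)) * qnewton Q b (Suc k) x)"
    by (simp add: sum.atMost_Suc_shift del: sum.atMost_Suc)
  finally show ?thesis
    by (simp only: sum_distrib_left mult.assoc[symmetric] qcoeff_Suc_diff)
qed

lemma qpoly_weighted:
  "(\<Sum>k\<le>n. Q ^ k * qcoeff Q n k * qnewton Q b k x) = Q ^ n * qpoly Q b n x + (1 - Q ^ n) * qpoly Q b (n - 1) x"
proof -
  have coeff: "Q ^ k * qcoeff Q n k = Q ^ n * qcoeff Q n k + (1 - Q ^ n) * qcoeff Q (n - 1) k" for k
    using qcoeff_pred[of n k] by (simp add: algebra_simps)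
  have "(\<Sum>k\<le>n. Q ^ k * qcoeff Q n k * qnewton Q b k x)
      = Q ^ n * qpoly Q b n x + (1 - Q ^ n) * (\<Sum>k\<le>n. qcoeff Q (n - 1) k * qnewton Q b k x)"
    unfolding coeff by (simp add: qpoly_def sum.distrib sum_distrib_left distrib_right mult.assoc)
  also have "(\<Sum>k\<le>n. qcoeff Q (n - 1) k * qnewton Q b k x) = qpoly Q b (n - 1) x"
    unfolding qpoly_def by (rule sum_atMost_qcoeff_extend[symmetric]) auto
  finally show ?thesis .
qed

lemma qpoly_recurrence:
  "x * qpoly Q b n x = Q ^ n * qpoly Q b (Suc n) x - (1 - b) * Q ^ n * qpoly Q b n x
     + b * (1 - Q ^ n) * qpoly Q b (n - 1) x"
proof -
  have newton: "x * qnewton Q b k x = qnewton Q b (Suc k) x + b * (Q ^ k * qnewton Q b k x)" for k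
    by (simp add: qnewton_Suc algebra_simps)
  have "x * qpoly Q b n x = (\<Sum>k\<le>n. qcoeff Q n k * (x * qnewton Q b k x))"
    by (simp add: qpoly_def sum_distrib_left mult.left_commute)
  also have "\<dots> = (\<Sum>k\<le>n. qcoeff Q n k * qnewton Q b (Suc k) x)
      + b * (\<Sum>k\<le>n. Q ^ k * qcoeff Q n k * qnewton Q b k x)"
    unfolding newton by (simp add: distrib_left sum.distrib sum_distrib_left mult_ac del: sum.atMost_Suc)
  finally show ?thesis
    unfolding qpoly_Suc_diff[symmetric] qpoly_weighted by (simp add: algebra_simps)
qed

lemma qpoly_mult_expand:
  "qpoly Q b n (Q * x) = (\<Sum>k\<le>n. Q ^ k * qcoeff Q n k * qnewton Q b k x)
     + b * (\<Sum>k\<le>n. (Q ^ (2 * k + 1) - Q ^ k) * qcoeff Q n (Suc k) * qnewton Q b k x)"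
proof -
  have "qpoly Q b n (Q * x) = (\<Sum>k\<le>Suc n. qcoeff Q n k * qnewton Q b k (Q * x))"
    unfolding qpoly_def by (rule sum_atMost_qcoeff_extend) auto
  also have "\<dots> = 1 + (\<Sum>k\<le>n. qcoeff Q n (Suc k) * qnewton Q b (Suc k) (Q * x))"
    by (simp add: sum.atMost_Suc_shift del: sum.atMost_Suc)
  also have "\<dots> = (1 + (\<Sum>k\<le>n. Q ^ Suc k * qcoeff Q n (Suc k) * qnewton Q b (Suc k) x))
      + b * (\<Sum>k\<le>n. (Q ^ (2 * k + 1) - Q ^ k) * qcoeff Q n (Suc k) * qnewton Q b k x)"
    unfolding qnewton_Suc_mult
    by (simp add: distrib_left sum.distrib sum_distrib_left mult_ac del: sum.atMost_Suc)
  also have "1 + (\<Sum>k\<le>n. Q ^ Suc k * qcoeff Q n (Suc k) * qnewton Q b (Suc k) x)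
      = (\<Sum>k\<le>n. Q ^ k * qcoeff Q n k * qnewton Q b k x)"
  proof -
    have "(\<Sum>k\<le>n. Q ^ k * qcoeff Q n k * qnewton Q b k x) = (\<Sum>k\<le>Suc n. Q ^ k * qcoeff Q n k * qnewton Q b k x)"
      by (rule sum_atMost_qcoeff_extend) auto
    then show ?thesis
      by (simp add: sum.atMost_Suc_shift del: sum.atMost_Suc)
  qed
  finally show ?thesis .
qed

lemma qpoly_mult_shift:
  "Q ^ n * qpoly Q b n (Q * x) = Q ^ (2 * n) * qpoly Q b n x + (1 - b) * (1 - Q ^ n) * Q ^ n * qpoly Q b (n - 1) x
     - b * Q * (1 - Q ^ n) * (1 - Q ^ (n - 1)) * qpoly Q b (n - 2) x"
proof -
  define W where "W m = (\<Sum>k\<le>m. Q ^ k * qcoeff Q m k * qnewton Q b k x)" for m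
  define D where "D = (\<Sum>k\<le>n. (Q ^ (2 * k + 1) - Q ^ k) * qcoeff Q n (Suc k) * qnewton Q b k x)"
  have coeff: "Q ^ n * ((Q ^ (2 * k + 1) - Q ^ k) * qcoeff Q n (Suc k))
      = - Q * (1 - Q ^ n) * (Q ^ k * qcoeff Q (n - 1) k)" for k
  proof -
    have pow: "Q ^ (2 * k + 1) = Q * (Q ^ k * Q ^ k)"
      by (simp add: power_add mult_2)
    have "Q ^ n * ((Q ^ (2 * k + 1) - Q ^ k) * qcoeff Q n (Suc k))
        = - (Q ^ k * (Q ^ n * (1 - Q ^ Suc k) * qcoeff Q n (Suc k)))"
      unfolding pow by (simp add: algebra_simps)
    then show ?thesis
      unfolding qcoeff_Suc_pred by (simp add: algebra_simps)
  qed
  have "Q ^ n * D = (\<Sum>k\<le>n. (Q ^ n * ((Q ^ (2 * k + 1) - Q ^ k) * qcoeff Q n (Suc k))) * qnewton Q b k x)"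
    unfolding D_def sum_distrib_left by (simp add: mult.assoc)
  also have "\<dots> = - Q * (1 - Q ^ n) * (\<Sum>k\<le>n. Q ^ k * qcoeff Q (n - 1) k * qnewton Q b k x)"
    unfolding coeff sum_distrib_left by (simp add: mult.assoc)
  also have "(\<Sum>k\<le>n. Q ^ k * qcoeff Q (n - 1) k * qnewton Q b k x) = W (n - 1)"
    unfolding W_def by (rule sum_atMost_qcoeff_extend[symmetric]) auto
  finally have D: "Q ^ n * D = - Q * (1 - Q ^ n) * W (n - 1)" .
  have "Q ^ n * qpoly Q b n (Q * x) = Q ^ n * W n + b * (Q ^ n * D)"
    unfolding qpoly_mult_expand W_def D_def by (simp add: algebra_simps)
  also have "\<dots> = Q ^ n * (Q ^ n * qpoly Q b n x + (1 - Q ^ n) * qpoly Q b (n - 1) x)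
      - b * ((1 - Q ^ n) * (Q * Q ^ (n - 1))) * qpoly Q b (n - 1) x
      - b * Q * (1 - Q ^ n) * (1 - Q ^ (n - 1)) * qpoly Q b (n - 2) x"
    unfolding D W_def qpoly_weighted diff_diff_left one_add_one by (simp add: algebra_simps)
  also have "(1 - Q ^ n) * (Q * Q ^ (n - 1)) = (1 - Q ^ n) * Q ^ n"
    by (cases n) simp_all
  finally show ?thesis
    unfolding mult_2 power_add by (simp add: algebra_simps)
qed

lemma qpoly_Suc_Suc_diff:
  "Q ^ Suc n * (qpoly Q b (Suc (Suc n)) x - qpoly Q b (Suc n) x)
     = (\<Sum>k\<le>n. inverse Q ^ k * qcoeff Q n k * (qnewton Q b (Suc (Suc k)) x + qnewton Q b (Suc k) x))"
proof -
  define g where "g k = inverse Q ^ k * qcoeff Q n k" for k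
  have "Q ^ Suc n * (qpoly Q b (Suc (Suc n)) x - qpoly Q b (Suc n) x)
      = qnewton Q b (Suc 0) x + (\<Sum>k\<le>n. qcoeff Q (Suc n) (Suc k) * qnewton Q b (Suc (Suc k)) x)"
    unfolding qpoly_Suc_diff by (simp add: sum.atMost_Suc_shift del: sum.atMost_Suc)
  also have "\<dots> = (qnewton Q b (Suc 0) x + (\<Sum>k\<le>n. g (Suc k) * qnewton Q b (Suc (Suc k)) x))
      + (\<Sum>k\<le>n. g k * qnewton Q b (Suc (Suc k)) x)"
  proof -
    have "qcoeff Q (Suc n) (Suc k) = g (Suc k) + g k" for k
      using qcoeff_Suc_Suc[of k n] Q_nz unfolding g_def by (simp add: power_inverse field_simps)
    then show ?thesis
      by (simp add: distrib_right sum.distrib del: sum.atMost_Suc)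
  qed
  also have "qnewton Q b (Suc 0) x + (\<Sum>k\<le>n. g (Suc k) * qnewton Q b (Suc (Suc k)) x)
      = (\<Sum>k\<le>n. g k * qnewton Q b (Suc k) x)"
  proof -
    have "(\<Sum>k\<le>n. g k * qnewton Q b (Suc k) x) = (\<Sum>k\<le>Suc n. g k * qnewton Q b (Suc k) x)"
      unfolding g_def by (rule sum_atMost_qcoeff_extend) auto
    then show ?thesis
      by (simp add: sum.atMost_Suc_shift g_def del: sum.atMost_Suc)
  qed
  finally show ?thesis
    unfolding g_def by (simp add: sum.distrib distrib_left)
qed

lemma qpoly_div_shift:
  "(b - x) * (1 + x) * qpoly Q b n (x / Q)
     = Q ^ Suc n * (b * qpoly Q b n x + (1 - b) * qpoly Q b (Suc n) x - qpoly Q b (Suc (Suc n)) x)"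
proof -
  have "(b - x) * (1 + x) * qpoly Q b n (x / Q)
      = (\<Sum>k\<le>n. qcoeff Q n k * ((b - x) * (1 + x) * qnewton Q b k (x / Q)))"
    unfolding qpoly_def sum_distrib_left by (simp add: mult_ac)
  also have "\<dots> = - (\<Sum>k\<le>n. inverse Q ^ k * qcoeff Q n k * (qnewton Q b (Suc (Suc k)) x + qnewton Q b (Suc k) x))
      - b * Q * (\<Sum>k\<le>n. qcoeff Q n k * qnewton Q b (Suc k) x)"
    unfolding qnewton_div_shift[OF Q_nz]
    by (simp add: algebra_simps sum.distrib sum_subtractf sum_negf sum_distrib_left del: sum.atMost_Suc)
  also have "\<dots> = Q ^ Suc n * (b * qpoly Q b n x + (1 - b) * qpoly Q b (Suc n) x - qpoly Q b (Suc (Suc n)) x)"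
    unfolding qpoly_Suc_Suc_diff[symmetric] qpoly_Suc_diff[symmetric] by (simp add: algebra_simps)
  finally show ?thesis .
qed

end

lemma qpoch_eq_qpochhammer: "qpoch = qpochhammer"
  by (simp add: fun_eq_iff qpoch_def qpochhammer_def)

lemma qpochhammer_of_real: "qpochhammer (of_real a) (of_real p) k = of_real (qpochhammer a p k)"
  by (simp add: qpochhammer_def)

lemma qpoly_of_real: "qpoly (of_real Q :: 'a::real_field) (of_real b) n (of_real x) = of_real (qpoly Q b n x)"
  by (simp add: qpoly_def qcoeff_def qnewton_def qpochhammer_def of_real_sum of_real_prod)

lemma qpochhammer_pos:
  fixes Q :: real
  assumes "0 < Q" "Q < 1"
  shows "0 < qpochhammer Q Q k"
  unfolding qpochhammer_def using assms
  by (intro prod_pos) (simp add: power_Suc[symmetric] power_less_one_iff del: power_Suc)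

lemma phi21_terminating:
  fixes Q b x :: complex
  assumes "Q \<noteq> 0" "x \<noteq> 0"
  shows "phi21 (inverse (Q ^ n)) (b / x) 0 Q (- Q * x) = qpoly Q b n x"
proof -
  have "qnewton Q b k x = (\<Prod>i<k. x * (1 - b / x * Q ^ i))" for k
    unfolding qnewton_def using assms(2) by (intro prod.cong) (simp_all add: field_simps)
  then have newton: "qpochhammer (b / x) Q k * x ^ k = qnewton Q b k x" for k
    by (simp add: qpochhammer_def prod.distrib)
  have "qpochhammer 0 Q k = 1" for k
    by (simp add: qpochhammer_def)
  moreover have "(- Q * x) ^ k = (- Q) ^ k * x ^ k" for k
    by (rule power_mult_distrib)
  ultimately have summand: "qpoch (inverse (Q ^ n)) Q k * qpoch (b / x) Q k / (qpoch Q Q k * qpoch 0 Q k) * (- Q * x) ^ k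
      = qcoeff Q n k * (qpochhammer (b / x) Q k * x ^ k)" for k
    by (simp add: qpoch_eq_qpochhammer qcoeff_def divide_inverse mult_ac)
  show ?thesis
    unfolding phi21_def summand newton qpoly_def
    by (rule suminf_finite) (auto simp: qcoeff_eq_0[OF assms(1)])
qed

definition acoef :: "real \<Rightarrow> nat \<Rightarrow> real" where
  "acoef q n = sqrt (1 - q ^ (2 * n))"

definition vnorm :: "real \<Rightarrow> real \<Rightarrow> nat \<Rightarrow> real" where
  "vnorm q \<tau> n = q powr (- real n * \<tau>) * q powr (real n * (real n - 1) / 2) / sqrt (qpochhammer (q\<^sup>2) (q\<^sup>2) n)"

definition vcoord :: "real \<Rightarrow> real \<Rightarrow> nat \<Rightarrow> real \<Rightarrow> real" where
  "vcoord q \<tau> n lam = vnorm q \<tau> n * qpoly (q\<^sup>2) (q powr (2 * \<tau>)) n lam"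

lemma pn_eq_vcoord:
  assumes "0 < q" "q < 1" "lam \<noteq> 0"
  shows "pn q \<tau> n lam = of_real (vcoord q \<tau> n lam)"
proof -
  define Q where "Q = q\<^sup>2"
  have Q: "0 < Q" "Q < 1"
    using assms by (auto simp: Q_def power_less_one_iff)
  have "q powr (2 * real n) = q powr real (2 * n)"
    by simp
  also have "\<dots> = Q ^ n"
    unfolding powr_realpow[OF assms(1)] Q_def by (rule power_mult)
  finally have "q powr (- 2 * real n) = inverse (Q ^ n)"
    by (simp add: powr_minus)
  then have "phi21 (of_real (q powr (- 2 * real n))) (of_real (q powr (2 * \<tau>) / lam)) 0 (of_real Q) (of_real (- Q * lam))
      = of_real (qpoly Q (q powr (2 * \<tau>)) n lam)"
    using phi21_terminating[of "of_real Q" "of_real lam" n "of_real (q powr (2 * \<tau>))"] Q assms(3)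
    by (simp flip: qpoly_of_real)
  moreover have "csqrt (qpoch (of_real Q) (of_real Q) n) = of_real (sqrt (qpochhammer Q Q n))"
    using qpochhammer_pos[OF Q, of n]
    by (simp add: qpoch_eq_qpochhammer qpochhammer_of_real csqrt_of_real)
  ultimately show ?thesis
    by (simp add: pn_def vcoord_def vnorm_def Q_def)
qed

lemma acoef_0 [simp]: "acoef q 0 = 0"
  by (simp add: acoef_def)

lemma acoef_sq:
  assumes "0 < q" "q < 1"
  shows "(acoef q n)\<^sup>2 = 1 - q ^ (2 * n)"
  using assms by (simp add: acoef_def power_le_one)

lemma acoef_vnorm_Suc:
  assumes "0 < q" "q < 1"
  shows "acoef q (Suc n) * vnorm q \<tau> (Suc n) = q ^ n / q powr \<tau> * vnorm q \<tau> n"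
proof -
  have "0 < qpochhammer (q\<^sup>2) (q\<^sup>2) n"
    using assms by (intro qpochhammer_pos) (auto simp: power_less_one_iff)
  moreover have "0 < 1 - q ^ (2 * Suc n)"
    using assms by (simp add: power_less_one_iff del: power_Suc)
  moreover have "q\<^sup>2 * (q\<^sup>2) ^ n = q ^ (2 * Suc n)"
    by (simp only: power_Suc[symmetric] power_mult)
  then have "qpochhammer (q\<^sup>2) (q\<^sup>2) (Suc n) = qpochhammer (q\<^sup>2) (q\<^sup>2) n * (1 - q ^ (2 * Suc n))"
    by (simp only: qpochhammer_Suc)
  ultimately have sqrt_ratio: "acoef q (Suc n) / sqrt (qpochhammer (q\<^sup>2) (q\<^sup>2) (Suc n)) = 1 / sqrt (qpochhammer (q\<^sup>2) (q\<^sup>2) n)"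
    by (simp add: acoef_def real_sqrt_mult del: power_Suc)
  have "- real (Suc n) * \<tau> = - real n * \<tau> - \<tau>"
    by (simp add: algebra_simps)
  then have exp1: "q powr (- real (Suc n) * \<tau>) = q powr (- real n * \<tau>) / q powr \<tau>"
    by (simp only: powr_diff)
  have exp2: "q powr (real (Suc n) * (real (Suc n) - 1) / 2) = q powr (real n * (real n - 1) / 2) * q ^ n"
  proof -
    have "real (Suc n) * (real (Suc n) - 1) / 2 = real n * (real n - 1) / 2 + real n"
      by (simp add: field_simps)
    then have "q powr (real (Suc n) * (real (Suc n) - 1) / 2) = q powr (real n * (real n - 1) / 2 + real n)"
      by (simp only:)
    then show ?thesis
      using assms(1) by (simp add: powr_add powr_realpow)
  qed
  have "acoef q (Suc n) * vnorm q \<tau> (Suc n) = q powr (- real (Suc n) * \<tau>)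
      * q powr (real (Suc n) * (real (Suc n) - 1) / 2) * (acoef q (Suc n) / sqrt (qpochhammer (q\<^sup>2) (q\<^sup>2) (Suc n)))"
    unfolding vnorm_def by simp
  also have "\<dots> = q ^ n / q powr \<tau> * vnorm q \<tau> n"
    unfolding exp1 exp2 sqrt_ratio vnorm_def by (simp add: ac_simps)
  finally show ?thesis .
qed

lemma acoef_vnorm_pred:
  assumes "0 < q" "q < 1"
  shows "acoef q n * q ^ (n - 1) * vnorm q \<tau> (n - 1) = q powr \<tau> * (1 - q ^ (2 * n)) * vnorm q \<tau> n"
proof (cases n)
  case (Suc m)
  have "q ^ m * vnorm q \<tau> m = q powr \<tau> * (acoef q (Suc m) * vnorm q \<tau> (Suc m))"
    using acoef_vnorm_Suc[OF assms, of m \<tau>] assms(1) by simp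
  then have "acoef q n * q ^ (n - 1) * vnorm q \<tau> (n - 1) = q powr \<tau> * (acoef q (Suc m))\<^sup>2 * vnorm q \<tau> (Suc m)"
    using Suc by (simp add: power2_eq_square mult_ac)
  then show ?thesis
    using Suc acoef_sq[OF assms, of "Suc m"] by simp
qed simp

lemma acoef_vnorm_pred2:
  assumes "0 < q" "q < 1"
  shows "q ^ (2 * n) * acoef q n * acoef q (n - 1) * vnorm q \<tau> (n - 2)
    = q ^ 3 * (q powr \<tau>)\<^sup>2 * (1 - q ^ (2 * n)) * (1 - q ^ (2 * (n - 1))) * vnorm q \<tau> n"
proof -
  consider "n = 0" | "n = 1" | m where "n = Suc (Suc m)"
    by (metis One_nat_def not0_implies_Suc)
  then show ?thesis
  proof cases
    case 3
    have "2 * n = 3 + (n - 1) + (n - 2)"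
      using 3 by simp
    then have pow: "q ^ (2 * n) = q ^ 3 * q ^ (n - 1) * q ^ (n - 2)"
      by (simp only: power_add)
    have "q ^ (2 * n) * acoef q n * acoef q (n - 1) * vnorm q \<tau> (n - 2)
        = q ^ 3 * (acoef q n * q ^ (n - 1) * (acoef q (n - 1) * q ^ (n - 1 - 1) * vnorm q \<tau> (n - 1 - 1)))"
      unfolding pow using 3 by (simp add: mult_ac)
    also have "acoef q (n - 1) * q ^ (n - 1 - 1) * vnorm q \<tau> (n - 1 - 1)
        = q powr \<tau> * (1 - q ^ (2 * (n - 1))) * vnorm q \<tau> (n - 1)"
      by (rule acoef_vnorm_pred[OF assms])
    also have "q ^ 3 * (acoef q n * q ^ (n - 1) * (q powr \<tau> * (1 - q ^ (2 * (n - 1))) * vnorm q \<tau> (n - 1)))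
        = q ^ 3 * q powr \<tau> * (1 - q ^ (2 * (n - 1))) * (acoef q n * q ^ (n - 1) * vnorm q \<tau> (n - 1))"
      by (simp only: mult_ac)
    also have "acoef q n * q ^ (n - 1) * vnorm q \<tau> (n - 1) = q powr \<tau> * (1 - q ^ (2 * n)) * vnorm q \<tau> n"
      by (rule acoef_vnorm_pred[OF assms])
    finally show ?thesis
      by (simp add: power2_eq_square mult_ac)
  qed simp_all
qed

lemma vcoord_Suc_ladder:
  assumes "0 < q" "q < 1"
  shows "q ^ n * acoef q (Suc n) * vcoord q \<tau> (Suc n) lam
    = q ^ (2 * n) / q powr \<tau> * vnorm q \<tau> n * qpoly (q\<^sup>2) (q powr (2 * \<tau>)) (Suc n) lam"
proof -
  have "q ^ n * acoef q (Suc n) * vcoord q \<tau> (Suc n) lam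
      = q ^ n * (acoef q (Suc n) * vnorm q \<tau> (Suc n)) * qpoly (q\<^sup>2) (q powr (2 * \<tau>)) (Suc n) lam"
    by (simp only: vcoord_def mult_ac)
  also have "\<dots> = (q ^ n * q ^ n) / q powr \<tau> * vnorm q \<tau> n * qpoly (q\<^sup>2) (q powr (2 * \<tau>)) (Suc n) lam"
    unfolding acoef_vnorm_Suc[OF assms] by simp
  also have "q ^ n * q ^ n = q ^ (2 * n)"
    by (simp add: mult_2 power_add)
  finally show ?thesis .
qed

lemma vcoord_pred_ladder:
  assumes "0 < q" "q < 1"
  shows "q ^ (n - 1) * acoef q n * vcoord q \<tau> (n - 1) lam
    = q powr \<tau> * (1 - q ^ (2 * n)) * vnorm q \<tau> n * qpoly (q\<^sup>2) (q powr (2 * \<tau>)) (n - 1) lam"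
proof -
  have "q ^ (n - 1) * acoef q n * vcoord q \<tau> (n - 1) lam
      = (acoef q n * q ^ (n - 1) * vnorm q \<tau> (n - 1)) * qpoly (q\<^sup>2) (q powr (2 * \<tau>)) (n - 1) lam"
    by (simp only: vcoord_def mult_ac)
  then show ?thesis
    unfolding acoef_vnorm_pred[OF assms] .
qed

lemma vcoord_pred2_ladder:
  assumes "0 < q" "q < 1"
  shows "q ^ (2 * n) * (acoef q n * acoef q (n - 1) * vcoord q \<tau> (n - 2) lam)
    = q ^ 3 * (q powr \<tau>)\<^sup>2 * (1 - q ^ (2 * n)) * (1 - q ^ (2 * (n - 1))) * vnorm q \<tau> n
      * qpoly (q\<^sup>2) (q powr (2 * \<tau>)) (n - 2) lam"
proof -
  have "q ^ (2 * n) * (acoef q n * acoef q (n - 1) * vcoord q \<tau> (n - 2) lam)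
      = (q ^ (2 * n) * acoef q n * acoef q (n - 1) * vnorm q \<tau> (n - 2)) * qpoly (q\<^sup>2) (q powr (2 * \<tau>)) (n - 2) lam"
    by (simp only: vcoord_def mult_ac)
  then show ?thesis
    unfolding acoef_vnorm_pred2[OF assms] .
qed

lemma vcoord_Suc2_ladder:
  assumes "0 < q" "q < 1"
  shows "acoef q (Suc n) * acoef q (Suc (Suc n)) * vcoord q \<tau> (Suc (Suc n)) lam
    = q * q ^ (2 * n) / (q powr \<tau>)\<^sup>2 * vnorm q \<tau> n * qpoly (q\<^sup>2) (q powr (2 * \<tau>)) (Suc (Suc n)) lam"
proof -
  have "acoef q (Suc n) * acoef q (Suc (Suc n)) * vcoord q \<tau> (Suc (Suc n)) lam
      = acoef q (Suc n) * (acoef q (Suc (Suc n)) * vnorm q \<tau> (Suc (Suc n)))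
        * qpoly (q\<^sup>2) (q powr (2 * \<tau>)) (Suc (Suc n)) lam"
    by (simp only: vcoord_def mult_ac)
  also have "\<dots> = q ^ Suc n / q powr \<tau> * (acoef q (Suc n) * vnorm q \<tau> (Suc n))
      * qpoly (q\<^sup>2) (q powr (2 * \<tau>)) (Suc (Suc n)) lam"
    unfolding acoef_vnorm_Suc[OF assms, of "Suc n"] by (simp add: divide_inverse mult_ac)
  also have "\<dots> = q * (q ^ n * q ^ n) / (q powr \<tau>)\<^sup>2 * vnorm q \<tau> n
      * qpoly (q\<^sup>2) (q powr (2 * \<tau>)) (Suc (Suc n)) lam"
    unfolding acoef_vnorm_Suc[OF assms] by (simp add: power2_eq_square)
  also have "q ^ n * q ^ n = q ^ (2 * n)"
    by (simp add: mult_2 power_add)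
  finally show ?thesis .
qed

lemma opA_twist:
  "opA q (\<lambda>n. z ^ n * f n) = (\<lambda>n. z ^ n * (z * of_real (acoef q (Suc n)) * f (Suc n)))"
  by (simp add: fun_eq_iff opA_def acoef_def mult_ac)

lemma opAadj_twist:
  assumes "z \<noteq> 0"
  shows "opAadj q (\<lambda>n. z ^ n * f n) = (\<lambda>n. z ^ n * (of_real (acoef q n) * f (n - 1) / z))"
proof
  fix n
  show "opAadj q (\<lambda>n. z ^ n * f n) n = z ^ n * (of_real (acoef q n) * f (n - 1) / z)"
    using assms by (cases n) (simp_all add: opAadj_def acoef_def)
qed

lemma opC_twist:
  "opC q \<phi> (\<lambda>n. z ^ n * f n) = (\<lambda>n. z ^ n * (exp (\<i> * of_real \<phi>) * of_real (q ^ n) * f n))"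
  by (simp add: fun_eq_iff opC_def mult_ac)

lemma opCadj_twist:
  "opCadj q \<phi> (\<lambda>n. z ^ n * f n) = (\<lambda>n. z ^ n * (inverse (exp (\<i> * of_real \<phi>)) * of_real (q ^ n) * f n))"
  by (simp add: fun_eq_iff opCadj_def exp_minus[symmetric] mult_ac)

text \<open>Conjugated by the phases \<open>(\<i> e\<^sup>i\<^sup>\<phi>)\<^sup>n\<close>, \<open>2R\<close> splits as
  \<open>e\<^sup>2\<^sup>i\<^sup>\<phi> R_plus + e\<^sup>-\<^sup>2\<^sup>i\<^sup>\<phi> R_minus + (q\<^sup>-\<^sup>\<sigma> - q\<^sup>\<sigma>) R_zero\<close>
  (\<open>opR_twist\<close>). At \<open>n = 0, 1\<close> the truncated indices \<open>n - 1\<close> and \<open>n - 2\<close> only occur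
  multiplied by \<open>acoef q 0 = 0\<close>.\<close>

definition R_plus :: "real \<Rightarrow> real \<Rightarrow> (nat \<Rightarrow> real) \<Rightarrow> nat \<Rightarrow> real" where
  "R_plus q \<tau> f n = q * q ^ (2 * n) * f n + q * (q powr - \<tau> - q powr \<tau>) * (q ^ n * acoef q (Suc n) * f (Suc n))
     - acoef q (Suc n) * acoef q (Suc (Suc n)) * f (Suc (Suc n))"

definition R_minus :: "real \<Rightarrow> real \<Rightarrow> (nat \<Rightarrow> real) \<Rightarrow> nat \<Rightarrow> real" where
  "R_minus q \<tau> f n = q * q ^ (2 * n) * f n + q * (q powr - \<tau> - q powr \<tau>) * (q ^ (n - 1) * acoef q n * f (n - 1))
     - acoef q n * acoef q (n - 1) * f (n - 2)"

definition R_zero :: "real \<Rightarrow> real \<Rightarrow> (nat \<Rightarrow> real) \<Rightarrow> nat \<Rightarrow> real" where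
  "R_zero q \<tau> f n = q * (q ^ (n - 1) * acoef q n * f (n - 1) + q ^ n * acoef q (Suc n) * f (Suc n)
     - (q powr - \<tau> - q powr \<tau>) * q ^ (2 * n) * f n)"

lemma opR_twist:
  fixes f :: "nat \<Rightarrow> real" and \<phi> :: real
  defines "E \<equiv> exp (\<i> * complex_of_real \<phi>)"
  shows "2 * opR q \<tau> \<sigma> \<phi> (\<lambda>n. (\<i> * E) ^ n * of_real (f n)) n
    = (\<i> * E) ^ n * (E\<^sup>2 * of_real (R_plus q \<tau> f n) + inverse E ^ 2 * of_real (R_minus q \<tau> f n)
        + of_real (q powr - \<sigma> - q powr \<sigma>) * of_real (R_zero q \<tau> f n))"
proof -
  define z where "z = \<i> * E"
  define w where "w = (\<lambda>n. z ^ n * complex_of_real (f n))"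
  have "E \<noteq> 0"
    by (simp add: E_def)
  then have z: "z \<noteq> 0" "z * z = - E\<^sup>2" "inverse z = - \<i> * inverse E"
    by (simp_all add: z_def power2_eq_square field_simps)
  have AA: "opA q (opA q w) n = z ^ n * (- E\<^sup>2 * of_real (acoef q (Suc n) * acoef q (Suc (Suc n)) * f (Suc (Suc n))))"
    unfolding w_def opA_twist by (simp add: z(2)[symmetric] mult_ac)
  have AdAd: "opAadj q (opAadj q w) n = z ^ n * (- (inverse E ^ 2) * of_real (acoef q n * acoef q (n - 1) * f (n - 2)))"
    unfolding w_def opAadj_twist[OF z(1)] by (simp add: divide_inverse z(3) power2_eq_square numeral_2_eq_2 mult_ac)
  have CC: "opC q \<phi> (opC q \<phi> w) n = z ^ n * (E\<^sup>2 * of_real (q ^ (2 * n) * f n))"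
    unfolding w_def opC_twist E_def[symmetric] by (simp add: power2_eq_square mult_2 mult_2_right power_add mult_ac)
  have CdCd: "opCadj q \<phi> (opCadj q \<phi> w) n = z ^ n * (inverse E ^ 2 * of_real (q ^ (2 * n) * f n))"
    unfolding w_def opCadj_twist E_def[symmetric] by (simp add: power2_eq_square mult_2 mult_2_right power_add mult_ac)
  have CdC: "opCadj q \<phi> (opC q \<phi> w) n = z ^ n * of_real (q ^ (2 * n) * f n)"
    unfolding w_def opC_twist opCadj_twist E_def[symmetric] using \<open>E \<noteq> 0\<close>
    by (simp add: mult_2 mult_2_right power_add mult_ac)
  have AdC: "opAadj q (opC q \<phi> w) n = z ^ n * (- \<i> * of_real (q ^ (n - 1) * acoef q n * f (n - 1)))"
    unfolding w_def opC_twist opAadj_twist[OF z(1)] E_def[symmetric] using \<open>E \<noteq> 0\<close>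
    by (cases n) (simp_all add: divide_inverse z(3) mult_ac)
  have AdCd: "opAadj q (opCadj q \<phi> w) n = z ^ n * (- \<i> * inverse E ^ 2 * of_real (q ^ (n - 1) * acoef q n * f (n - 1)))"
    unfolding w_def opCadj_twist opAadj_twist[OF z(1)] E_def[symmetric]
    by (cases n) (simp_all add: divide_inverse z(3) power2_eq_square mult_ac)
  have CdA: "opCadj q \<phi> (opA q w) n = z ^ n * (\<i> * of_real (q ^ n * acoef q (Suc n) * f (Suc n)))"
    unfolding w_def opA_twist opCadj_twist E_def[symmetric] using \<open>E \<noteq> 0\<close>
    by (simp add: z_def mult_ac)
  have CA: "opC q \<phi> (opA q w) n = z ^ n * (\<i> * E\<^sup>2 * of_real (q ^ n * acoef q (Suc n) * f (Suc n)))"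
    unfolding w_def opA_twist opC_twist E_def[symmetric] by (simp add: z_def power2_eq_square mult_ac)
  show ?thesis
    unfolding z_def[symmetric] w_def[symmetric] opR_def Let_def AA AdAd CC CdCd CdC AdC AdCd CdA CA
      R_plus_def R_minus_def R_zero_def
    by (simp add: algebra_simps)
qed

lemma square_nz_pow_ne_1:
  fixes q :: real
  assumes "0 < q" "q < 1"
  shows "q\<^sup>2 \<noteq> 0" and "(q\<^sup>2) ^ Suc k \<noteq> 1"
proof -
  have "0 < q\<^sup>2" "q\<^sup>2 < 1"
    using assms by (simp_all add: power_less_one_iff)
  then show "q\<^sup>2 \<noteq> 0" "(q\<^sup>2) ^ Suc k \<noteq> 1"
    using power_Suc_less_one[of "q\<^sup>2" k] by simp_all
qed

lemma R_zero_vcoord: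
  assumes "0 < q" "q < 1"
  shows "R_zero q \<tau> (\<lambda>m. vcoord q \<tau> m lam) n = lam * q powr (1 - \<tau>) * vcoord q \<tau> n lam"
proof -
  define t where "t = q powr \<tau>"
  define x where "x = q ^ (2 * n)"
  define c where "c = vnorm q \<tau> n"
  define P where "P m = qpoly (q\<^sup>2) (q powr (2 * \<tau>)) m lam" for m
  have t: "t \<noteq> 0" "q powr (2 * \<tau>) = t\<^sup>2" "q powr - \<tau> = 1 / t" "q powr (1 - \<tau>) = q / t"
    using assms(1) by (simp_all add: t_def powr_minus_divide powr_diff power2_eq_square flip: powr_add)
  have pred: "q ^ (n - 1) * acoef q n * vcoord q \<tau> (n - 1) lam = t * (1 - x) * c * P (n - 1)"
    unfolding vcoord_pred_ladder[OF assms] t_def x_def c_def P_def ..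
  have succ: "q ^ n * acoef q (Suc n) * vcoord q \<tau> (Suc n) lam = x / t * c * P (Suc n)"
    unfolding vcoord_Suc_ladder[OF assms] t_def x_def c_def P_def by simp
  have Qx: "(q\<^sup>2) ^ n = x"
    by (simp add: x_def power_mult)
  have rec: "lam * P n = x * P (Suc n) - (1 - t\<^sup>2) * x * P n + t\<^sup>2 * (1 - x) * P (n - 1)"
    using qpoly_recurrence[OF square_nz_pow_ne_1[OF assms], of lam "q powr (2 * \<tau>)" n]
    unfolding P_def[symmetric] Qx by (simp add: t(2))
  have "R_zero q \<tau> (\<lambda>m. vcoord q \<tau> m lam) n
      = q * c / t * (x * P (Suc n) - (1 - t\<^sup>2) * x * P n + t\<^sup>2 * (1 - x) * P (n - 1))"
    unfolding R_zero_def pred succ using t(1)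
    by (simp add: t(3) vcoord_def c_def P_def x_def field_simps power2_eq_square flip: t_def)
  also have "\<dots> = lam * q powr (1 - \<tau>) * vcoord q \<tau> n lam"
    unfolding rec[symmetric] by (simp add: t(4) vcoord_def c_def P_def)
  finally show ?thesis .
qed

lemma R_minus_vcoord:
  assumes "0 < q" "q < 1"
  shows "R_minus q \<tau> (\<lambda>m. vcoord q \<tau> m lam) n = q * vcoord q \<tau> n (lam * q\<^sup>2)"
proof -
  define t where "t = q powr \<tau>"
  define x where "x = q ^ (2 * n)"
  define x' where "x' = q ^ (2 * (n - 1))"
  define c where "c = vnorm q \<tau> n"
  define P where "P m = qpoly (q\<^sup>2) (q powr (2 * \<tau>)) m lam" for m
  have t: "t \<noteq> 0" "q powr (2 * \<tau>) = t\<^sup>2" "q powr - \<tau> = 1 / t"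
    using assms(1) by (simp_all add: t_def powr_minus_divide power2_eq_square flip: powr_add)
  have "x \<noteq> 0"
    using assms(1) by (simp add: x_def)
  have pred: "q ^ (n - 1) * acoef q n * vcoord q \<tau> (n - 1) lam = t * (1 - x) * c * P (n - 1)"
    unfolding vcoord_pred_ladder[OF assms] t_def x_def c_def P_def ..
  have pred2: "x * (acoef q n * acoef q (n - 1) * vcoord q \<tau> (n - 2) lam)
      = q ^ 3 * t\<^sup>2 * (1 - x) * (1 - x') * c * P (n - 2)"
    unfolding x_def vcoord_pred2_ladder[OF assms] t_def x'_def c_def P_def ..
  have pows: "(q\<^sup>2) ^ n = x" "(q\<^sup>2) ^ (n - 1) = x'" "(q\<^sup>2) ^ (2 * n) = x\<^sup>2"
    unfolding x_def x'_def power_mult[symmetric] by simp_all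
  have shift: "x * qpoly (q\<^sup>2) (q powr (2 * \<tau>)) n (q\<^sup>2 * lam)
      = x\<^sup>2 * P n + (1 - t\<^sup>2) * (1 - x) * x * P (n - 1) - t\<^sup>2 * q\<^sup>2 * (1 - x) * (1 - x') * P (n - 2)"
    using qpoly_mult_shift[OF square_nz_pow_ne_1[OF assms], where b = "q powr (2 * \<tau>)" and x = lam and n = n]
    unfolding P_def[symmetric] pows by (simp add: t(2))
  have "x * R_minus q \<tau> (\<lambda>m. vcoord q \<tau> m lam) n
      = q * c * (x\<^sup>2 * P n + (1 - t\<^sup>2) * (1 - x) * x * P (n - 1) - t\<^sup>2 * q\<^sup>2 * (1 - x) * (1 - x') * P (n - 2))"
    unfolding R_minus_def ring_distribs pred pred2 using t(1)
    by (simp add: t(3) vcoord_def c_def P_def x_def field_simps power2_eq_square power3_eq_cube flip: t_def)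
  also have "\<dots> = x * (q * vcoord q \<tau> n (lam * q\<^sup>2))"
    unfolding shift[symmetric] by (simp add: vcoord_def c_def mult_ac)
  finally show ?thesis
    using \<open>x \<noteq> 0\<close> by simp
qed

lemma R_plus_vcoord:
  assumes "0 < q" "q < 1"
  shows "R_plus q \<tau> (\<lambda>m. vcoord q \<tau> m lam) n
    = 1 / q * ((1 - q powr (- 2 * \<tau>) * lam) * (1 + lam)) * vcoord q \<tau> n (lam / q\<^sup>2)"
proof -
  define t where "t = q powr \<tau>"
  define x where "x = q ^ (2 * n)"
  define c where "c = vnorm q \<tau> n"
  define P where "P m = qpoly (q\<^sup>2) (q powr (2 * \<tau>)) m lam" for m
  have t: "t \<noteq> 0" "q powr (2 * \<tau>) = t\<^sup>2" "q powr - \<tau> = 1 / t" "q powr (- 2 * \<tau>) = 1 / t\<^sup>2"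
    using assms(1) by (simp_all add: t_def powr_minus_divide power2_eq_square flip: powr_add)
  have succ: "q ^ n * acoef q (Suc n) * vcoord q \<tau> (Suc n) lam = x / t * c * P (Suc n)"
    unfolding vcoord_Suc_ladder[OF assms] t_def x_def c_def P_def by simp
  have succ2: "acoef q (Suc n) * acoef q (Suc (Suc n)) * vcoord q \<tau> (Suc (Suc n)) lam
      = q * x / t\<^sup>2 * c * P (Suc (Suc n))"
    unfolding vcoord_Suc2_ladder[OF assms] t_def x_def c_def P_def ..
  have "(q\<^sup>2) ^ Suc n = q\<^sup>2 * x"
    by (simp add: x_def power_mult)
  then have shift: "(t\<^sup>2 - lam) * (1 + lam) * qpoly (q\<^sup>2) (q powr (2 * \<tau>)) n (lam / q\<^sup>2)
      = q\<^sup>2 * x * (t\<^sup>2 * P n + (1 - t\<^sup>2) * P (Suc n) - P (Suc (Suc n)))"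
    using qpoly_div_shift[OF square_nz_pow_ne_1[OF assms], of "q powr (2 * \<tau>)" lam n]
    unfolding P_def[symmetric] by (simp add: t(2))
  have "1 / q * ((1 - q powr (- 2 * \<tau>) * lam) * (1 + lam)) * vcoord q \<tau> n (lam / q\<^sup>2)
      = c / (q * t\<^sup>2) * ((t\<^sup>2 - lam) * (1 + lam) * qpoly (q\<^sup>2) (q powr (2 * \<tau>)) n (lam / q\<^sup>2))"
    unfolding t(4) vcoord_def c_def using t(1) assms(1) by (simp add: field_simps)
  also have "\<dots> = R_plus q \<tau> (\<lambda>m. vcoord q \<tau> m lam) n"
    unfolding shift R_plus_def succ succ2 using t(1) assms(1)
    by (simp add: t(3) vcoord_def c_def P_def x_def field_simps power2_eq_square flip: t_def)
  finally show ?thesis ..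
qed

lemma vvec_eq_twist:
  assumes "0 < q" "q < 1" "lam \<noteq> 0"
  shows "vvec q \<tau> \<phi> lam = (\<lambda>n. (\<i> * exp (\<i> * of_real \<phi>)) ^ n * of_real (vcoord q \<tau> n lam))"
proof
  fix n
  have "exp (\<i> * of_nat n * complex_of_real \<phi>) = exp (\<i> * complex_of_real \<phi>) ^ n"
    by (simp add: exp_of_nat_mult[symmetric] mult_ac)
  then show "vvec q \<tau> \<phi> lam n = (\<i> * exp (\<i> * of_real \<phi>)) ^ n * of_real (vcoord q \<tau> n lam)"
    by (simp add: vvec_def pn_eq_vcoord[OF assms] power_mult_distrib)
qed

theorem proposition6p2:
  fixes q \<tau> \<sigma> \<phi> lam :: real
  assumes "0 < q" "q < 1"
    and "0 \<le> \<phi>" "\<phi> < 2 * pi"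
    and "(\<exists>k::nat. lam = - (q ^ (2 * k))) \<or> (\<exists>k::nat. lam = q powr (2 * \<tau> + 2 * real k))"
  shows "(\<lambda>n. 2 * opR q \<tau> \<sigma> \<phi> (vvec q \<tau> \<phi> lam) n) =
    (\<lambda>n. complex_of_real q * exp (- 2 * \<i> * complex_of_real \<phi>) * vvec q \<tau> \<phi> (lam * q^2) n
       + complex_of_real (1 / q) * exp (2 * \<i> * complex_of_real \<phi>)
           * complex_of_real ((1 - q powr (- 2 * \<tau>) * lam) * (1 + lam)) * vvec q \<tau> \<phi> (lam / q^2) n
       + complex_of_real (lam * q powr (1 - \<tau>) * (q powr (- \<sigma>) - q powr \<sigma>)) * vvec q \<tau> \<phi> lam n)"
proof -
  have "lam \<noteq> 0"
    using assms(1,5) by auto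
  then have "lam * q\<^sup>2 \<noteq> 0" "lam / q\<^sup>2 \<noteq> 0"
    using assms(1) by simp_all
  note vvec = vvec_eq_twist[OF assms(1,2) \<open>lam \<noteq> 0\<close>] vvec_eq_twist[OF assms(1,2) this(1)]
    vvec_eq_twist[OF assms(1,2) this(2)]
  define E where "E = exp (\<i> * complex_of_real \<phi>)"
  have e2: "exp (2 * \<i> * complex_of_real \<phi>) = E\<^sup>2"
    unfolding E_def by (simp add: exp_of_nat_mult[symmetric] mult_ac)
  have em2: "exp (- 2 * \<i> * complex_of_real \<phi>) = inverse E ^ 2"
    unfolding E_def by (simp add: exp_of_nat_mult[symmetric] exp_minus[symmetric] power_inverse mult_ac)
  show ?thesis
    unfolding vvec opR_twist R_plus_vcoord[OF assms(1,2)] R_minus_vcoord[OF assms(1,2)]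
      R_zero_vcoord[OF assms(1,2)]
    unfolding E_def[symmetric] e2 em2 by (intro ext) (simp add: algebra_simps)
qed

end
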